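(* Let $G$ be a maximal $3$-$\gamma_{c}$-vertex critical graph of order $n$ with clique number $\omega$. Then $\omega\leq n-3$, and equality holds if and only if $G$ is the cycle $C_{5}$.
   Context: All graphs are finite, simple and connected. A set $D\subseteq V(G)$ is a connected dominating set of $G$ if every vertex of $G$ is in $D$ or adjacent to a vertex of $D$, and $G[D]$ is connected; $\gamma_{c}(G)$ is the minimum cardinality of such a set. $G$ is $k$-$\gamma_{c}$-edge critical if $\gamma_{c}(G)=k$ and $\gamma_{c}(G+uv)<k$ for every pair of non-adjacent vertices $u,v$. A $2$-connected graph $G$ is $k$-$\gamma_{c}$-vertex critical if $\gamma_{c}(G)=k$ and $\gamma_{c}(G-v)<k$ for every $v\in V(G)$. $G$ is maximal $k$-$\gamma_{c}$-vertex critical if it is both $k$-$\gamma_{c}$-edge critical and $k$-$\gamma_{c}$-vertex critical. *)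

theory Defs
  imports Main
begin

definition simple_graph :: "'a set \<Rightarrow> 'a set set \<Rightarrow> bool" where
  "simple_graph V E \<longleftrightarrow> finite V \<and> (\<forall>e\<in>E. e \<subseteq> V \<and> card e = 2)"

definition connected_set :: "'a set set \<Rightarrow> 'a set \<Rightarrow> bool" where
  "connected_set E S \<longleftrightarrow> S \<noteq> {} \<and>
     (\<forall>u\<in>S. \<forall>v\<in>S. \<exists>xs. xs \<noteq> [] \<and> hd xs = u \<and> last xs = v \<and> set xs \<subseteq> S \<and>
        (\<forall>i < length xs - 1. {xs ! i, xs ! Suc i} \<in> E))"

definition connected_graph :: "'a set \<Rightarrow> 'a set set \<Rightarrow> bool" where
  "connected_graph V E \<longleftrightarrow> connected_set E V"

definition delete_vertex :: "'a \<Rightarrow> 'a set set \<Rightarrow> 'a set set" where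
  "delete_vertex v E = {e \<in> E. v \<notin> e}"

definition two_connected :: "'a set \<Rightarrow> 'a set set \<Rightarrow> bool" where
  "two_connected V E \<longleftrightarrow> card V \<ge> 3 \<and> connected_graph V E \<and>
     (\<forall>v\<in>V. connected_graph (V - {v}) (delete_vertex v E))"

definition connected_dominating_set :: "'a set \<Rightarrow> 'a set set \<Rightarrow> 'a set \<Rightarrow> bool" where
  "connected_dominating_set V E D \<longleftrightarrow> D \<subseteq> V \<and>
     (\<forall>v\<in>V. v \<in> D \<or> (\<exists>u\<in>D. {u, v} \<in> E)) \<and> connected_set E D"

definition gamma_c :: "'a set \<Rightarrow> 'a set set \<Rightarrow> nat" where
  "gamma_c V E = (LEAST k. \<exists>D. connected_dominating_set V E D \<and> card D = k)"

definition edge_critical :: "nat \<Rightarrow> 'a set \<Rightarrow> 'a set set \<Rightarrow> bool" where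
  "edge_critical k V E \<longleftrightarrow> gamma_c V E = k \<and>
     (\<forall>u\<in>V. \<forall>v\<in>V. u \<noteq> v \<and> {u, v} \<notin> E \<longrightarrow> gamma_c V (insert {u, v} E) < k)"

definition vertex_critical :: "nat \<Rightarrow> 'a set \<Rightarrow> 'a set set \<Rightarrow> bool" where
  "vertex_critical k V E \<longleftrightarrow> two_connected V E \<and> gamma_c V E = k \<and>
     (\<forall>v\<in>V. gamma_c (V - {v}) (delete_vertex v E) < k)"

definition maximal_vertex_critical :: "nat \<Rightarrow> 'a set \<Rightarrow> 'a set set \<Rightarrow> bool" where
  "maximal_vertex_critical k V E \<longleftrightarrow> edge_critical k V E \<and> vertex_critical k V E"

definition is_clique :: "'a set set \<Rightarrow> 'a set \<Rightarrow> bool" where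
  "is_clique E K \<longleftrightarrow> (\<forall>u\<in>K. \<forall>v\<in>K. u \<noteq> v \<longrightarrow> {u, v} \<in> E)"

definition clique_number :: "'a set \<Rightarrow> 'a set set \<Rightarrow> nat" where
  "clique_number V E = Max {card K | K. K \<subseteq> V \<and> is_clique E K}"

definition is_C5 :: "'a set \<Rightarrow> 'a set set \<Rightarrow> bool" where
  "is_C5 V E \<longleftrightarrow> (\<exists>f. bij_betw f {0..<5::nat} V \<and>
     E = {{f i, f ((i + 1) mod 5)} | i. i < 5})"

end

theory Submission
  imports Defs
begin

text \<open>
  As G has connected domination number 3, no vertex and no edge of G dominates G. For every
  vertex v, a minimum connected dominating set of G - v has at most two vertices; it cannot be
  a single vertex a (a and a neighbour of v would dominate G), so G - v is dominated by an edge
  ab with both ends non-adjacent to v. If a clique K missed at most two vertices, one or two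
  vertices of K adjacent to them would dominate G, hence \<omega> \<le> n - 3. If K misses exactly
  three vertices a, b, c, comparing the dominating edges of G - v and G - w for v, w \<in> K
  forces the cycle v w a b c; the same comparison rules out a third vertex of K, and a
  dominating edge ac is impossible, so G = C5.
\<close>

lemma connected_set_clique:
  assumes "K \<noteq> {}" "is_clique E K"
  shows "connected_set E K"
  unfolding connected_set_def
proof (intro conjI ballI)
  fix u v assume uv: "u \<in> K" "v \<in> K"
  show "\<exists>xs. xs \<noteq> [] \<and> hd xs = u \<and> last xs = v \<and> set xs \<subseteq> K \<and>
        (\<forall>i<length xs - 1. {xs ! i, xs ! Suc i} \<in> E)"
  proof (cases "u = v")
    case True
    with uv show ?thesis by (intro exI[of _ "[u]"]) auto
  next
    case False
    with assms(2) uv show ?thesis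
      by (intro exI[of _ "[u, v]"]) (auto simp: is_clique_def)
  qed
qed (fact assms(1))

lemma is_clique_edge: "{a, b} \<in> E \<Longrightarrow> is_clique E {a, b}"
  unfolding is_clique_def by (auto simp: insert_commute)

lemma connected_set_has_neighbour:
  assumes "connected_set E S" "u \<in> S" "w \<in> S" "u \<noteq> w"
  shows "\<exists>z\<in>S. {u, z} \<in> E"
proof -
  from assms obtain xs where xs: "xs \<noteq> []" "hd xs = u" "last xs = w" "set xs \<subseteq> S"
    "\<forall>i < length xs - 1. {xs ! i, xs ! Suc i} \<in> E"
    unfolding connected_set_def by blast
  then obtain zs where "xs = u # zs" by (cases xs) auto
  moreover from this xs(3) assms(4) obtain z zs' where "zs = z # zs'" by (cases zs) auto
  ultimately show ?thesis using xs(4,5) by force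
qed

lemma gamma_c_le:
  assumes "connected_dominating_set V E D"
  shows "gamma_c V E \<le> card D"
  unfolding gamma_c_def by (rule Least_le) (use assms in blast)

lemma gamma_c_attained:
  assumes "connected_dominating_set V E D"
  obtains D' where "connected_dominating_set V E D'" "card D' = gamma_c V E"
proof -
  have "\<exists>k D. connected_dominating_set V E D \<and> card D = k" using assms by blast
  then have "\<exists>D. connected_dominating_set V E D \<and> card D = gamma_c V E"
    unfolding gamma_c_def by (rule LeastI_ex)
  then show thesis using that by blast
qed

lemma finite_clique_cards:
  assumes "finite V"
  shows "finite {card K | K. K \<subseteq> V \<and> is_clique E K}"
  by (rule finite_subset[of _ "card ` Pow V"]) (auto simp: assms)

lemma clique_number_ge:
  assumes "finite V" "K \<subseteq> V" "is_clique E K"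
  shows "card K \<le> clique_number V E"
  unfolding clique_number_def
  by (rule Max_ge[OF finite_clique_cards[OF assms(1)]]) (use assms in blast)

lemma clique_number_attained:
  assumes "finite V"
  obtains K where "K \<subseteq> V" "is_clique E K" "card K = clique_number V E"
proof -
  have "{card K | K. K \<subseteq> V \<and> is_clique E K} \<noteq> {}"
    unfolding is_clique_def by blast
  from Max_in[OF finite_clique_cards[OF assms] this] obtain K
    where "K \<subseteq> V" "is_clique E K" "card K = clique_number V E"
    unfolding clique_number_def by auto
  then show thesis by (rule that)
qed

lemma is_C5I:
  assumes "distinct [v0, v1, v2, v3, v4]"
    and "V = {v0, v1, v2, v3, v4}"
    and "E = {{v0, v1}, {v1, v2}, {v2, v3}, {v3, v4}, {v4, v0}}"
  shows "is_C5 V E"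
  unfolding is_C5_def
proof (intro exI conjI)
  let ?f = "(!) [v0, v1, v2, v3, v4]"
  have I5: "{0..<5::nat} = {0, 1, 2, 3, 4}" by auto
  show "bij_betw ?f {0..<5} V"
    by (rule bij_betw_nth) (use assms(1,2) in auto)
  have "{{?f i, ?f ((i + 1) mod 5)} | i. i < 5} = (\<lambda>i. {?f i, ?f ((i + 1) mod 5)}) ` {0..<5}"
    by auto
  then show "E = {{?f i, ?f ((i + 1) mod 5)} | i. i < 5}"
    unfolding I5 assms(3) by simp
qed

lemma is_C5_card:
  assumes "is_C5 V E"
  shows "card V = 5"
  using assms bij_betw_same_card unfolding is_C5_def by fastforce

lemma subset_pair_of_card_le_2:
  assumes "finite A" "card A \<le> 2" "A \<subseteq> V" "V \<noteq> {}"
  obtains x y where "x \<in> V" "y \<in> V" "A \<subseteq> {x, y}"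
proof -
  have "card A = 0 \<or> card A = 1 \<or> card A = 2" using assms(2) by linarith
  then consider "A = {}" | a where "A = {a}" | a b where "A = {a, b}"
    using assms(1) by (auto simp: card_1_singleton_iff card_2_iff)
  then show thesis
    by cases (use assms(3,4) that in blast)+
qed

definition dominating_edge_except :: "'a set \<Rightarrow> 'a set set \<Rightarrow> 'a \<Rightarrow> 'a \<Rightarrow> 'a \<Rightarrow> bool" where
  "dominating_edge_except V E v a b \<longleftrightarrow> {a, b} \<in> E \<and> a \<in> V - {v} \<and> b \<in> V - {v} \<and>
     {a, v} \<notin> E \<and> {b, v} \<notin> E \<and>
     (\<forall>u\<in>V - {v}. u = a \<or> u = b \<or> {a, u} \<in> E \<or> {b, u} \<in> E)"

lemma dominating_edge_except_commute:
  "dominating_edge_except V E v a b \<longleftrightarrow> dominating_edge_except V E v b a"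
  unfolding dominating_edge_except_def by (auto simp: insert_commute)

lemma dominating_edge_except_outside_clique:
  assumes "dominating_edge_except V E v a b" "is_clique E K" "v \<in> K"
  shows "a \<notin> K" "b \<notin> K"
  using assms unfolding dominating_edge_except_def is_clique_def by auto

locale three_vertex_critical =
  fixes V :: "'a set" and E :: "'a set set"
  assumes simple: "simple_graph V E"
    and critical: "vertex_critical 3 V E"
begin

lemma finite_V: "finite V"
  using simple unfolding simple_graph_def by simp

lemma edge_in_V: "{a, b} \<in> E \<Longrightarrow> a \<in> V \<and> b \<in> V"
  using simple unfolding simple_graph_def by blast

lemma edge_neq: "{a, b} \<in> E \<Longrightarrow> a \<noteq> b"
  using simple unfolding simple_graph_def by fastforce

lemma edgeE:
  assumes "e \<in> E"
  obtains p q where "e = {p, q}" "p \<in> V" "q \<in> V" "p \<noteq> q"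
  using assms simple unfolding simple_graph_def by (metis card_2_iff insert_subset)

lemma gamma_c_eq: "gamma_c V E = 3"
  using critical unfolding vertex_critical_def by simp

lemma card_V_ge_3: "3 \<le> card V"
  using critical unfolding vertex_critical_def two_connected_def by simp

lemma connected_delete_vertex: "v \<in> V \<Longrightarrow> connected_set (delete_vertex v E) (V - {v})"
  using critical unfolding vertex_critical_def two_connected_def connected_graph_def by simp

lemma gamma_c_delete_vertex:
  assumes "v \<in> V"
  shows "gamma_c (V - {v}) (delete_vertex v E) \<le> 2"
proof -
  have "gamma_c (V - {v}) (delete_vertex v E) < 3"
    using critical assms unfolding vertex_critical_def by blast
  then show ?thesis by simp
qed

lemma small_clique_not_dominating:
  assumes "D \<subseteq> V" "D \<noteq> {}" "is_clique E D" "card D \<le> 2"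
  shows "\<exists>u\<in>V. u \<notin> D \<and> (\<forall>d\<in>D. {d, u} \<notin> E)"
proof (rule ccontr)
  assume "\<not> ?thesis"
  then have "\<forall>u\<in>V. u \<in> D \<or> (\<exists>d\<in>D. {d, u} \<in> E)" by blast
  then have "connected_dominating_set V E D"
    using assms(1) connected_set_clique[OF assms(2,3)] unfolding connected_dominating_set_def by blast
  then have "gamma_c V E \<le> 2" using gamma_c_le assms(4) by (meson order_trans)
  then show False by (simp add: gamma_c_eq)
qed

lemma no_dominating_edge:
  assumes "{a, b} \<in> E"
  shows "\<exists>u\<in>V. u \<noteq> a \<and> u \<noteq> b \<and> {a, u} \<notin> E \<and> {b, u} \<notin> E"
proof -
  have "card {a, b} \<le> 2" by (simp add: card_insert_if)
  then show ?thesis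
    using small_clique_not_dominating[of "{a, b}"] is_clique_edge[OF assms] assms edge_in_V by auto
qed

lemma other_neighbour:
  assumes "x \<in> V"
  shows "\<exists>z\<in>V. z \<noteq> x \<and> z \<noteq> y \<and> {x, z} \<in> E"
proof -
  have "card (V - {x}) \<ge> 2" using card_V_ge_3 finite_V assms by (simp add: card_Diff_singleton)
  then have "V - {x} \<noteq> {}" by (metis card.empty zero_neq_numeral le_zero_eq)
  then obtain y' where y': "y' \<in> V" "x \<noteq> y'" "y \<in> V - {x} \<Longrightarrow> y' = y" by blast
  have "card (V - {x, y'}) > 0"
    using card_V_ge_3 finite_V assms y'(1,2) by (simp add: card_Diff_subset)
  then obtain t where t: "t \<in> V - {x, y'}" by (metis card_gt_0_iff ex_in_conv)
  have "x \<in> V - {y'}" "t \<in> V - {y'}" "x \<noteq> t" using assms y' t by auto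
  with connected_set_has_neighbour[OF connected_delete_vertex[OF y'(1)]]
  obtain z where "z \<in> V - {y'}" "{x, z} \<in> delete_vertex y' E" by blast
  then have z: "z \<in> V" "z \<noteq> y'" "{x, z} \<in> E" by (auto simp: delete_vertex_def)
  moreover have "z \<noteq> x" using edge_neq[OF z(3)] by simp
  moreover have "z \<noteq> y" using y'(3) z(1,2) \<open>z \<noteq> x\<close> by auto
  ultimately show ?thesis by blast
qed

lemma connected_set_card_le_2_is_clique:
  assumes "connected_set E' D" "E' \<subseteq> E" "finite D" "card D \<le> 2"
  shows "is_clique E D"
  unfolding is_clique_def
proof (intro ballI impI)
  fix p q assume pq: "p \<in> D" "q \<in> D" "p \<noteq> q"
  then have "card {p, q} = card D" using assms(3,4) card_mono[of D "{p, q}"] by auto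
  then have D: "D = {p, q}" using pq by (metis assms(3) card_subset_eq empty_subsetI insert_subset)
  from connected_set_has_neighbour[OF assms(1) pq] obtain z where "z \<in> D" "{p, z} \<in> E"
    using assms(2) by blast
  with D edge_neq show "{p, q} \<in> E" by auto
qed

lemma dominating_edge_except_exists:
  assumes v: "v \<in> V"
  obtains a b where "dominating_edge_except V E v a b"
proof -
  let ?V = "V - {v}" and ?E = "delete_vertex v E"
  have sub: "?E \<subseteq> E" unfolding delete_vertex_def by auto
  have "connected_dominating_set ?V ?E ?V"
    using connected_delete_vertex[OF v] unfolding connected_dominating_set_def by auto
  then obtain D where D: "connected_dominating_set ?V ?E D" "card D = gamma_c ?V ?E"
    by (rule gamma_c_attained)
  have DV: "D \<subseteq> ?V" and Dc: "connected_set ?E D"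
    and dom: "\<forall>u\<in>?V. u \<in> D \<or> (\<exists>d\<in>D. {d, u} \<in> E)"
    using D(1) sub unfolding connected_dominating_set_def by blast+
  have fin: "finite D" using DV finite_V finite_subset by blast
  have card: "card D \<le> 2" using D(2) gamma_c_delete_vertex[OF v] by simp
  have clique: "is_clique E D" using connected_set_card_le_2_is_clique[OF Dc sub fin card] .
  have "D \<noteq> {}" using Dc unfolding connected_set_def by simp
  with small_clique_not_dominating[of D] DV clique card dom
  have undom: "\<forall>d\<in>D. {d, v} \<notin> E" by blast
  have "card D \<noteq> 0" using \<open>D \<noteq> {}\<close> fin by simp
  with card have "card D = 1 \<or> card D = 2" by linarith
  then show thesis
  proof
    assume "card D = 1"
    then obtain a where a: "D = {a}" by (auto simp: card_Suc_eq)
    obtain w where w: "w \<in> V" "w \<noteq> v" "w \<noteq> a" "{v, w} \<in> E"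
      using other_neighbour[OF v] by blast
    then have "{a, w} \<in> E" using dom a by auto
    then obtain u where "u \<in> V" "u \<noteq> a" "u \<noteq> w" "{a, u} \<notin> E" "{w, u} \<notin> E"
      using no_dominating_edge by blast
    then show thesis using dom a w by (auto simp: insert_commute)
  next
    assume "card D = 2"
    then obtain a b where ab: "D = {a, b}" "a \<noteq> b" by (auto simp: card_2_iff)
    then have "dominating_edge_except V E v a b"
      using DV dom undom clique unfolding dominating_edge_except_def is_clique_def
      by (auto simp: insert_commute)
    then show thesis by (rule that)
  qed
qed

lemma clique_card_le:
  assumes K: "K \<subseteq> V" "is_clique E K"
  shows "card K + 3 \<le> card V"
proof (rule ccontr)
  assume "\<not> ?thesis"
  then have "card (V - K) \<le> 2"
    using K finite_V by (simp add: card_Diff_subset finite_subset)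
  moreover have "V \<noteq> {}" using card_V_ge_3 by auto
  ultimately obtain x y where xy: "x \<in> V" "y \<in> V" "V - K \<subseteq> {x, y}"
    using subset_pair_of_card_le_2[of "V - K" V] finite_V by blast
  have near: "\<exists>z\<in>K. z = p \<or> {z, p} \<in> E" if "p \<in> V" "V - K \<subseteq> {p, q}" for p q
  proof (cases "p \<in> K")
    case False
    from other_neighbour[OF \<open>p \<in> V\<close>, of q]
    obtain z where z: "z \<in> V" "z \<noteq> p" "z \<noteq> q" "{p, z} \<in> E" by blast
    with that have "z \<in> K" by blast
    with z(4) show ?thesis by (metis insert_commute)
  qed blast
  obtain zx zy where zx: "zx \<in> K" "zx = x \<or> {zx, x} \<in> E"
    and zy: "zy \<in> K" "zy = y \<or> {zy, y} \<in> E"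
    using near[of x y] near[of y x] xy by (auto simp: insert_commute)
  let ?D = "{zx, zy}"
  have "is_clique E ?D" using K(2) zx zy unfolding is_clique_def by blast
  moreover have "card ?D \<le> 2" by (simp add: card_insert_if)
  ultimately obtain u where u: "u \<in> V" "u \<notin> ?D" "\<forall>d\<in>?D. {d, u} \<notin> E"
    using small_clique_not_dominating[of ?D] zx zy K(1) by blast
  show False
  proof (cases "u \<in> K")
    case True
    with K(2) zx(1) u show False unfolding is_clique_def by auto
  next
    case False
    with xy u have "u = x \<or> u = y" by blast
    with u zx zy show False by blast
  qed
qed

lemma two_le_clique_number: "2 \<le> clique_number V E"
proof -
  obtain x where x: "x \<in> V" using card_V_ge_3 by fastforce
  then obtain z where z: "z \<in> V" "z \<noteq> x" "{x, z} \<in> E" using other_neighbour[of x x] by blast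
  then have "card {x, z} \<le> clique_number V E"
    using clique_number_ge[OF finite_V _ is_clique_edge] x by blast
  with z show ?thesis by simp
qed

lemma clique_number_le: "clique_number V E \<le> card V - 3"
  using clique_number_attained[OF finite_V] clique_card_le by (metis add_le_imp_le_diff)

lemma clique_number_eq_if_C5:
  assumes "is_C5 V E"
  shows "clique_number V E = card V - 3"
  using is_C5_card[OF assms] clique_number_le two_le_clique_number by simp

lemma outside_clique_labelling:
  assumes K: "K \<subseteq> V" "is_clique E K" "card (V - K) = 3"
    and vw: "v \<in> K" "w \<in> K" "v \<noteq> w"
  obtains a b c where "V - K = {a, b, c}"
    "dominating_edge_except V E v a b" "dominating_edge_except V E w b c"
    "{c, v} \<in> E" "{a, w} \<in> E"
proof -
  have vV: "v \<in> V" and wV: "w \<in> V" using K vw by auto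
  obtain a1 b1 where ab1: "dominating_edge_except V E v a1 b1"
    using dominating_edge_except_exists[OF vV] .
  have out1: "a1 \<in> V - K" "b1 \<in> V - K" "a1 \<noteq> b1"
    using ab1 dominating_edge_except_outside_clique[OF ab1 K(2) vw(1)] edge_neq
    unfolding dominating_edge_except_def by auto
  have "card (V - K - {a1, b1}) = 1"
    using K(3) out1 by (simp add: card_Diff_subset)
  then obtain c where c: "V - K = {a1, b1, c}"
    using out1 by (auto simp: card_1_singleton_iff)
  obtain a2 b2 where ab2: "dominating_edge_except V E w a2 b2"
    using dominating_edge_except_exists[OF wV] .
  have out2: "a2 \<in> {a1, b1, c}" "b2 \<in> {a1, b1, c}"
    using ab2 dominating_edge_except_outside_clique[OF ab2 K(2) vw(2)] c
    unfolding dominating_edge_except_def by auto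
  have "{a2, v} \<in> E \<or> {b2, v} \<in> E"
    using ab2 vV vw out2 c unfolding dominating_edge_except_def by auto
  moreover have "{a1, v} \<notin> E" "{b1, v} \<notin> E"
    using ab1 unfolding dominating_edge_except_def by auto
  ultimately have "a2 = c \<or> b2 = c" using out2 by auto
  moreover have "a2 \<noteq> b2" using ab2 edge_neq unfolding dominating_edge_except_def by blast
  ultimately obtain d where d: "d \<in> {a1, b1}" "dominating_edge_except V E w d c"
  proof (elim disjE conjE)
    assume "a2 = c" "a2 \<noteq> b2"
    with ab2 have "dominating_edge_except V E w b2 c"
      by (simp add: dominating_edge_except_commute[of V E w b2])
    moreover have "b2 \<in> {a1, b1}" using out2 \<open>a2 = c\<close> \<open>a2 \<noteq> b2\<close> by auto
    ultimately show thesis using that by blast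
  next
    assume "b2 = c" "a2 \<noteq> b2"
    with ab2 out2 show thesis using that[of a2] by auto
  qed
  have cv: "{c, v} \<in> E"
    using d ab1 vV vw c out1 unfolding dominating_edge_except_def by auto
  obtain a where a: "dominating_edge_except V E v a d" "{a1, b1} = {a, d}"
    using d(1) ab1 dominating_edge_except_commute by (metis insert_commute insertE singletonD)
  have "{a, w} \<in> E"
    using a d wV vw c out1 unfolding dominating_edge_except_def by auto
  with a(2) c cv show thesis using that[OF _ a(1) d(2)] by auto
qed

lemma clique_subset_pair:
  assumes K: "K \<subseteq> V" "is_clique E K" and vw: "v \<in> K" "w \<in> K"
    and abc: "V - K = {a, b, c}" "dominating_edge_except V E v a b"
      "dominating_edge_except V E w b c"
  shows "K \<subseteq> {v, w}"
proof
  fix u assume u: "u \<in> K"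
  show "u \<in> {v, w}"
  proof (rule ccontr)
    assume u_vw: "u \<notin> {v, w}"
    have uV: "u \<in> V" using u K by auto
    obtain p q where pq: "dominating_edge_except V E u p q"
      using dominating_edge_except_exists[OF uV] .
    have out: "p \<in> {a, b, c}" "q \<in> {a, b, c}"
      using dominating_edge_except_outside_clique[OF pq K(2) u] pq abc(1)
      unfolding dominating_edge_except_def by auto
    have "{p, w} \<in> E \<or> {q, w} \<in> E"
      using pq vw K u_vw out abc(1) unfolding dominating_edge_except_def by auto
    with out abc(3) have "a \<in> {p, q}"
      unfolding dominating_edge_except_def by auto
    with pq have "{a, u} \<notin> E" unfolding dominating_edge_except_def by auto
    moreover have "u \<notin> {a, b}" using u abc(1) by auto
    ultimately have bu: "{b, u} \<in> E"
      using abc(2) uV u_vw unfolding dominating_edge_except_def by auto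
    obtain x where x: "x \<in> V" "x \<noteq> b" "x \<noteq> u" "{b, x} \<notin> E" "{u, x} \<notin> E"
      using no_dominating_edge[OF bu] by blast
    show False
    proof (cases "x \<in> K")
      case True
      with x u K(2) show False unfolding is_clique_def by auto
    next
      case False
      with x abc show False unfolding dominating_edge_except_def by (auto simp: insert_commute)
    qed
  qed
qed

lemma C5_if_clique_number_eq:
  assumes "clique_number V E = card V - 3"
  shows "is_C5 V E"
proof -
  obtain K where K: "K \<subseteq> V" "is_clique E K" "card K = card V - 3"
    using clique_number_attained[OF finite_V] assms by metis
  have "card (V - K) = 3"
    using K card_V_ge_3 finite_V by (simp add: card_Diff_subset finite_subset)
  have "2 \<le> card K" using K assms two_le_clique_number by simp
  then obtain v w where vw: "v \<in> K" "w \<in> K" "v \<noteq> w"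
    by (metis card_le_Suc0_iff_eq finite_V K(1) finite_subset not_less_eq_eq numeral_2_eq_2)
  obtain a b c where abc: "V - K = {a, b, c}"
      "dominating_edge_except V E v a b" "dominating_edge_except V E w b c"
      and cv: "{c, v} \<in> E" and aw: "{a, w} \<in> E"
    using outside_clique_labelling[OF K(1,2) \<open>card (V - K) = 3\<close> vw] .
  have "K = {v, w}" using clique_subset_pair[OF K(1,2) vw(1,2) abc] vw by auto
  then have V: "V = {v, w, a, b, c}" using K(1) abc(1) by auto
  have vwE: "{v, w} \<in> E" using K(2) vw unfolding is_clique_def by blast
  have ab: "{a, b} \<in> E" "{a, v} \<notin> E" "{b, v} \<notin> E"
    and bc: "{b, c} \<in> E" "{b, w} \<notin> E" "{c, w} \<notin> E"
    using abc(2,3) unfolding dominating_edge_except_def by auto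
  have distinct: "distinct [v, w, a, b, c]"
    using \<open>K = {v, w}\<close> abc(1) vw edge_neq[OF ab(1)] edge_neq[OF bc(1)] aw bc(3) by auto
  have ac: "{a, c} \<notin> E"
  proof
    assume "{a, c} \<in> E"
    from no_dominating_edge[OF this] obtain x where
      "x \<in> V" "x \<noteq> a" "x \<noteq> c" "{a, x} \<notin> E" "{c, x} \<notin> E" by blast
    with V cv aw ab(1) show False by (auto simp: insert_commute)
  qed
  have "E = {{v, w}, {w, a}, {a, b}, {b, c}, {c, v}}"
  proof
    show "{{v, w}, {w, a}, {a, b}, {b, c}, {c, v}} \<subseteq> E"
      using vwE aw ab(1) bc(1) cv by (auto simp: insert_commute)
  next
    show "E \<subseteq> {{v, w}, {w, a}, {a, b}, {b, c}, {c, v}}"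
    proof
      fix e assume "e \<in> E"
      then obtain p q where e: "e = {p, q}" "p \<in> V" "q \<in> V" "p \<noteq> q" by (rule edgeE)
      have "{p, q} \<in> E" using \<open>e \<in> E\<close> e(1) by simp
      moreover have "p \<in> {v, w, a, b, c}" "q \<in> {v, w, a, b, c}" using e(2,3) V by auto
      ultimately show "e \<in> {{v, w}, {w, a}, {a, b}, {b, c}, {c, v}}"
        using e(1,4) ab(2,3) bc(2,3) ac by (elim insertE emptyE; simp add: insert_commute)
    qed
  qed
  then show ?thesis by (rule is_C5I[OF distinct V])
qed

end

theorem corollary3p8:
  fixes V :: "'a set" and E :: "'a set set"
  assumes "simple_graph V E"
    and "connected_graph V E"
    and "maximal_vertex_critical 3 V E"
  shows "clique_number V E \<le> card V - 3 \<and>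
         (clique_number V E = card V - 3 \<longleftrightarrow> is_C5 V E)"
proof -
  interpret three_vertex_critical V E
    using assms(1,3) by unfold_locales (simp_all add: maximal_vertex_critical_def)
  show ?thesis
    using clique_number_le C5_if_clique_number_eq clique_number_eq_if_C5 by blast
qed

end
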